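(* Let $f\in\mathbb{C}\{x,y,z\}$ have decomposition into homogeneous parts $f=f_m+f_{m+k}+\cdots$ with $f_m\neq0$ and $k\geq1$, let $V=\{f=0\}\subset\mathbb{C}^3$, $\mathbf{C}=V(f_m)\subset\mathbb{P}^2$, and assume $\operatorname{Sing}(\mathbf{C})\cap V(f_{m+k})=\emptyset$ in $\mathbb{P}^2$. Let $\pi_0$ be the blow-up of $\mathbb{C}^3$ at the origin, $E_0\cong\mathbb{P}^2$ its exceptional divisor and $\widehat V$ the strict transform of $V$, so that $\widehat V\cap E_0$ is identified with $\mathbf{C}$. Let $P\in\mathbf{C}$. Then $\widehat V$ and $E_0$ intersect transversely at $P$ if and only if $P$ is a smooth point of $\mathbf{C}$. Otherwise, i.e. if $P\in\operatorname{Sing}(\mathbf{C})$, there exist local analytic coordinates $(x,y,z)$ around $P$ such that $E_0=\{z=0\}$ and $\widehat V=\{z^k+h(x,y)=0\}$, where $h(x,y)=0$ is a local equation of $\mathbf{C}$ at $P$ and $h$ has order at least $2$. *)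

theory Defs
  imports "HOL-Analysis.Analysis"
begin

type_synonym c3 = "complex \<times> complex \<times> complex"
type_synonym c2 = "complex \<times> complex"

definition deg :: "nat \<times> nat \<times> nat \<Rightarrow> nat" where
  "deg \<alpha> = (case \<alpha> of (i, j, l) \<Rightarrow> i + j + l)"

definition monom3 :: "nat \<times> nat \<times> nat \<Rightarrow> c3 \<Rightarrow> complex" where
  "monom3 \<alpha> p = (case \<alpha> of (i, j, l) \<Rightarrow> (case p of (x, y, z) \<Rightarrow> x ^ i * y ^ j * z ^ l))"

text \<open>A germ f in C{x,y,z} is given by its coefficient family c, converging absolutely on a ball.\<close>
definition converges_on_ball :: "(nat \<times> nat \<times> nat \<Rightarrow> complex) \<Rightarrow> real \<Rightarrow> bool" where
  "converges_on_ball c r \<longleftrightarrow> r > 0 \<and>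
     (\<forall>p \<in> ball 0 r. (\<lambda>\<alpha>. norm (c \<alpha> * monom3 \<alpha> p)) summable_on UNIV)"

definition hpart :: "(nat \<times> nat \<times> nat \<Rightarrow> complex) \<Rightarrow> nat \<Rightarrow> c3 \<Rightarrow> complex" where
  "hpart c d p = (\<Sum>\<alpha> \<in> {\<alpha>. deg \<alpha> = d}. c \<alpha> * monom3 \<alpha> p)"

text \<open>Singular points of the projective curve C = V(f_m), in homogeneous coordinates:
  nonzero w with f_m(w) = 0 and vanishing gradient of f_m at w.\<close>
definition sing_pt :: "(nat \<times> nat \<times> nat \<Rightarrow> complex) \<Rightarrow> nat \<Rightarrow> c3 \<Rightarrow> bool" where
  "sing_pt c m w \<longleftrightarrow> w \<noteq> 0 \<and> hpart c m w = 0 \<and>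
     (hpart c m has_derivative (\<lambda>_. 0)) (at w)"

text \<open>Standard affine charts of the blow-up of C^3 at 0 (j = 0,1,2):
  chart j (u,v,t) = t * dehom j (u,v); exceptional divisor E_0 = {t = 0},
  and (u,v,0) corresponds to the point [dehom j (u,v)] of E_0 = P^2.\<close>
definition dehom :: "nat \<Rightarrow> c2 \<Rightarrow> c3" where
  "dehom j uv = (case uv of (u, v) \<Rightarrow>
     (if j = 0 then (1, u, v) else if j = 1 then (u, 1, v) else (u, v, 1)))"

definition coordc :: "nat \<Rightarrow> c3 \<Rightarrow> complex" where
  "coordc j w = (case w of (a, b, d) \<Rightarrow> (if j = 0 then a else if j = 1 then b else d))"

text \<open>Affine coordinates of the projective point [w] in chart j (requires coordc j w \<noteq> 0).\<close>
definition aff :: "nat \<Rightarrow> c3 \<Rightarrow> c2" where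
  "aff j w = (case w of (a, b, d) \<Rightarrow>
     (if j = 0 then (b / a, d / a) else if j = 1 then (a / b, d / b) else (a / d, b / d)))"

text \<open>Local equation of the strict transform of V = {f = 0} in chart j:
  f(t * dehom j (u,v)) = t^m * strict c m j (u,v,t).\<close>
definition strict :: "(nat \<times> nat \<times> nat \<Rightarrow> complex) \<Rightarrow> nat \<Rightarrow> nat \<Rightarrow> c3 \<Rightarrow> complex" where
  "strict c m j q = (case q of (u, v, t) \<Rightarrow>
     infsum (\<lambda>\<alpha>. c \<alpha> * monom3 \<alpha> (dehom j (u, v)) * t ^ (deg \<alpha> - m)) UNIV)"

definition holo3 :: "c3 set \<Rightarrow> (c3 \<Rightarrow> complex) \<Rightarrow> bool" where
  "holo3 U f \<longleftrightarrow> open U \<and> (\<forall>p \<in> U. \<exists>a b d.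
     (f has_derivative (\<lambda>(x, y, z). a * x + b * y + d * z)) (at p))"

definition holo2 :: "c2 set \<Rightarrow> (c2 \<Rightarrow> complex) \<Rightarrow> bool" where
  "holo2 U f \<longleftrightarrow> open U \<and> (\<forall>p \<in> U. \<exists>a b.
     (f has_derivative (\<lambda>(x, y). a * x + b * y)) (at p))"

definition holo_map3 :: "c3 set \<Rightarrow> (c3 \<Rightarrow> c3) \<Rightarrow> bool" where
  "holo_map3 U \<Phi> \<longleftrightarrow> holo3 U (\<lambda>q. fst (\<Phi> q)) \<and> holo3 U (\<lambda>q. fst (snd (\<Phi> q)))
     \<and> holo3 U (\<lambda>q. snd (snd (\<Phi> q)))"

definition biholo3 :: "c3 set \<Rightarrow> c3 set \<Rightarrow> (c3 \<Rightarrow> c3) \<Rightarrow> bool" where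
  "biholo3 U W \<Phi> \<longleftrightarrow> open U \<and> open W \<and> holo_map3 U \<Phi> \<and> bij_betw \<Phi> U W \<and>
     (\<exists>\<Psi>. holo_map3 W \<Psi> \<and> (\<forall>q \<in> U. \<Psi> (\<Phi> q) = q))"

text \<open>The hypersurface {g = 0} meets E_0 = {t = 0} transversely at q:
  g is differentiable at q with differential not proportional to dt (so g is a local
  equation of a smooth surface whose tangent plane differs from that of E_0).\<close>
definition transversal_E0 :: "(c3 \<Rightarrow> complex) \<Rightarrow> c3 \<Rightarrow> bool" where
  "transversal_E0 g q \<longleftrightarrow> g q = 0 \<and> (\<exists>a b d.
     (g has_derivative (\<lambda>(x, y, z). a * x + b * y + d * z)) (at q) \<and> (a \<noteq> 0 \<or> b \<noteq> 0))"

end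

theory Submission
  imports Defs
begin

text \<open>In the chart \<open>j\<close> of the blow-up, with coordinates \<open>(u, v, t)\<close> and \<open>E\<^sub>0 = {t = 0}\<close>, the strict
  transform is \<open>f(t \<cdot> dehom j (u, v)) / t^m = h\<^sub>0(u, v) + t^k G(u, v, t)\<close>, where \<open>h\<^sub>0\<close> is the
  dehomogenised \<open>f\<^sub>m\<close> (a local equation of \<open>C\<close>) and \<open>G\<close> is a convergent power series with
  \<open>G(u, v, 0)\<close> the dehomogenised \<open>f\<^sub>m\<^sub>+\<^sub>k\<close>. At \<open>(u\<^sub>0, v\<^sub>0, 0)\<close> its differential is
  \<open>dh\<^sub>0 + k 0^(k-1) G dt\<close>, so transversality to \<open>E\<^sub>0\<close> means \<open>dh\<^sub>0 \<noteq> 0\<close>, i.e. smoothness of \<open>C\<close>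
  at \<open>P\<close>. At a singular point the hypothesis gives \<open>G(P) \<noteq> 0\<close>, so \<open>G\<close> has a holomorphic
  \<open>k\<close>-th root \<open>\<rho>\<close> near \<open>P\<close>, and by the inverse function theorem \<open>(u - u\<^sub>0, v - v\<^sub>0, t \<rho>)\<close>
  are holomorphic coordinates in which the strict transform reads \<open>z^k + h\<^sub>0\<close>.\<close>

section \<open>Linear forms and continuous partial derivatives\<close>

definition lin3 :: "complex \<Rightarrow> complex \<Rightarrow> complex \<Rightarrow> c3 \<Rightarrow> complex" where
  "lin3 a b d h = a * fst h + b * fst (snd h) + d * snd (snd h)"

definition lin2 :: "complex \<Rightarrow> complex \<Rightarrow> c2 \<Rightarrow> complex" where
  "lin2 a b h = a * fst h + b * snd h"

lemma split_lin3: "(\<lambda>(x, y, z). a * x + b * y + d * z) = lin3 a b d"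
  by (auto simp: fun_eq_iff lin3_def)

lemma split_lin2: "(\<lambda>(x, y). a * x + b * y) = lin2 a b"
  by (auto simp: fun_eq_iff lin2_def)

lemma holo3_iff: "holo3 U f \<longleftrightarrow> open U \<and> (\<forall>p\<in>U. \<exists>a b d. (f has_derivative lin3 a b d) (at p))"
  by (simp add: holo3_def split_lin3)

lemma holo2_iff: "holo2 U f \<longleftrightarrow> open U \<and> (\<forall>p\<in>U. \<exists>a b. (f has_derivative lin2 a b) (at p))"
  by (simp add: holo2_def split_lin2)

lemma transversal_E0_iff:
  "transversal_E0 g q \<longleftrightarrow> g q = 0 \<and> (\<exists>a b d. (g has_derivative lin3 a b d) (at q) \<and> (a \<noteq> 0 \<or> b \<noteq> 0))"
  by (simp add: transversal_E0_def split_lin3)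

lemma bounded_linear_lin3: "bounded_linear (lin3 a b d)"
  unfolding lin3_def[abs_def]
  by (intro bounded_linear_add bounded_linear_compose[OF bounded_linear_mult_right]
      bounded_linear_fst bounded_linear_compose[OF bounded_linear_fst bounded_linear_snd]
      bounded_linear_compose[OF bounded_linear_snd bounded_linear_snd])

lemma lin3_eq_iff [simp]: "lin3 a b d = lin3 a' b' d' \<longleftrightarrow> a = a' \<and> b = b' \<and> d = d'"
proof
  assume eq: "lin3 a b d = lin3 a' b' d'"
  show "a = a' \<and> b = b' \<and> d = d'"
    using fun_cong[OF eq, of "(1, 0, 0)"] fun_cong[OF eq, of "(0, 1, 0)"] fun_cong[OF eq, of "(0, 0, 1)"]
    by (simp add: lin3_def)
qed simp

lemma lin2_eq_zero_iff: "lin2 a b = (\<lambda>_. 0) \<longleftrightarrow> a = 0 \<and> b = 0"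
proof
  assume eq: "lin2 a b = (\<lambda>_. 0)"
  show "a = 0 \<and> b = 0"
    using fun_cong[OF eq, of "(1, 0)"] fun_cong[OF eq, of "(0, 1)"] by (simp add: lin2_def)
qed (simp add: lin2_def[abs_def])

lemma lin3_diff: "lin3 a b d h - lin3 a' b' d' h = lin3 (a - a') (b - b') (d - d') h"
  by (simp add: lin3_def algebra_simps)

lemma sum_lin3: "(\<lambda>h. \<Sum>i\<in>A. lin3 (a i) (b i) (d i) h) = lin3 (\<Sum>i\<in>A. a i) (\<Sum>i\<in>A. b i) (\<Sum>i\<in>A. d i)"
  by (simp add: fun_eq_iff lin3_def sum.distrib sum_distrib_right)

lemma has_derivative_sum_lin3:
  assumes "\<And>i. i \<in> A \<Longrightarrow> (f i has_derivative lin3 (a i) (b i) (d i)) (at x)"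
  shows "((\<lambda>x. \<Sum>i\<in>A. f i x) has_derivative lin3 (\<Sum>i\<in>A. a i) (\<Sum>i\<in>A. b i) (\<Sum>i\<in>A. d i)) (at x)"
  using has_derivative_sum[of A f "\<lambda>i. lin3 (a i) (b i) (d i)", OF assms] by (simp add: sum_lin3)

lemma norm_lin3_le: "norm (lin3 a b d h) \<le> (norm a + norm b + norm d) * norm h"
proof -
  obtain x y z where h: "h = (x, y, z)" by (cases h) auto
  have yz: "norm (y, z) \<le> norm h"
    unfolding h by (rule norm_snd_le)
  have "norm x \<le> norm h" "norm y \<le> norm h" "norm z \<le> norm h"
    unfolding h by (rule norm_fst_le) (use order_trans[OF norm_fst_le yz] order_trans[OF norm_snd_le yz] h in auto)
  then have "norm a * norm x + norm b * norm y + norm d * norm z \<le> (norm a + norm b + norm d) * norm h"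
    by (simp add: distrib_right add_mono mult_left_mono)
  moreover have "norm (lin3 a b d h) \<le> norm a * norm x + norm b * norm y + norm d * norm z"
    unfolding lin3_def h by (auto intro!: order_trans[OF norm_triangle_ineq] add_mono simp: norm_mult)
  ultimately show ?thesis by linarith
qed

definition has_continuous_partials_on ::
    "c3 set \<Rightarrow> (c3 \<Rightarrow> complex) \<Rightarrow> (c3 \<Rightarrow> complex) \<Rightarrow> (c3 \<Rightarrow> complex) \<Rightarrow> (c3 \<Rightarrow> complex) \<Rightarrow> bool"
  where "has_continuous_partials_on U f fx fy fz \<longleftrightarrow>
    (\<forall>q\<in>U. (f has_derivative lin3 (fx q) (fy q) (fz q)) (at q)) \<and>
    continuous_on U fx \<and> continuous_on U fy \<and> continuous_on U fz"

lemma has_continuous_partials_on_continuous: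
  "has_continuous_partials_on U f fx fy fz \<Longrightarrow> continuous_on U f"
  unfolding has_continuous_partials_on_def
  by (meson continuous_at_imp_continuous_on has_derivative_continuous)

section \<open>Power series in three variables\<close>

type_synonym idx = "nat \<times> nat \<times> nat"

text \<open>Arbitrary exponent maps let one
  notion cover a series, its formal partial derivatives and its pull-backs to the charts.\<close>
definition mterm :: "(idx \<Rightarrow> complex) \<Rightarrow> (idx \<Rightarrow> nat) \<Rightarrow> (idx \<Rightarrow> nat) \<Rightarrow> (idx \<Rightarrow> nat) \<Rightarrow> idx \<Rightarrow> c3 \<Rightarrow> complex"
  where "mterm a P Q S \<alpha> q = a \<alpha> * fst q ^ P \<alpha> * fst (snd q) ^ Q \<alpha> * snd (snd q) ^ S \<alpha>"

definition mseries :: "(idx \<Rightarrow> complex) \<Rightarrow> (idx \<Rightarrow> nat) \<Rightarrow> (idx \<Rightarrow> nat) \<Rightarrow> (idx \<Rightarrow> nat) \<Rightarrow> c3 \<Rightarrow> complex"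
  where "mseries a P Q S q = (\<Sum>\<^sub>\<infinity>\<alpha>. mterm a P Q S \<alpha> q)"

definition mseries_abs_summable ::
    "(idx \<Rightarrow> complex) \<Rightarrow> (idx \<Rightarrow> nat) \<Rightarrow> (idx \<Rightarrow> nat) \<Rightarrow> (idx \<Rightarrow> nat) \<Rightarrow> real \<Rightarrow> real \<Rightarrow> real \<Rightarrow> bool"
  where "mseries_abs_summable a P Q S R1 R2 R3 \<longleftrightarrow>
    (\<lambda>\<alpha>. norm (a \<alpha>) * R1 ^ P \<alpha> * R2 ^ Q \<alpha> * R3 ^ S \<alpha>) summable_on UNIV"

definition polydisc :: "real \<Rightarrow> real \<Rightarrow> real \<Rightarrow> c3 set" where
  "polydisc R1 R2 R3 = {q. norm (fst q) < R1 \<and> norm (fst (snd q)) < R2 \<and> norm (snd (snd q)) < R3}"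

definition dcoeff :: "(idx \<Rightarrow> complex) \<Rightarrow> (idx \<Rightarrow> nat) \<Rightarrow> idx \<Rightarrow> complex" where
  "dcoeff a P \<alpha> = a \<alpha> * of_nat (P \<alpha>)"

text \<open>\<open>dexp P \<alpha>\<close> truncates at \<open>0\<close>, harmlessly: there \<open>dcoeff a P \<alpha> = 0\<close>.\<close>
definition dexp :: "(idx \<Rightarrow> nat) \<Rightarrow> idx \<Rightarrow> nat" where
  "dexp P \<alpha> = P \<alpha> - 1"

abbreviation "mseries_dx a P Q S \<equiv> mseries (dcoeff a P) (dexp P) Q S"
abbreviation "mseries_dy a P Q S \<equiv> mseries (dcoeff a Q) P (dexp Q) S"
abbreviation "mseries_dz a P Q S \<equiv> mseries (dcoeff a S) P Q (dexp S)"

lemma norm_mterm_le: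
  assumes "norm (fst q) \<le> r1" "norm (fst (snd q)) \<le> r2" "norm (snd (snd q)) \<le> r3"
  shows "norm (mterm a P Q S \<alpha> q) \<le> norm (a \<alpha>) * r1 ^ P \<alpha> * r2 ^ Q \<alpha> * r3 ^ S \<alpha>"
  unfolding mterm_def norm_mult norm_power
  by (intro mult_mono power_mono) (use assms in \<open>auto intro!: mult_nonneg_nonneg zero_le_power intro: order_trans[OF norm_ge_zero]\<close>)

lemma open_polydisc: "open (polydisc R1 R2 R3)"
  unfolding polydisc_def
  by (intro open_Collect_conj open_Collect_less) (auto intro!: continuous_intros)

lemma convex_polydisc: "convex (polydisc R1 R2 R3)"
proof -
  have convex_slab: "convex {q::c3. norm (f q) < R}" if "linear f" for f :: "c3 \<Rightarrow> complex" and R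
  proof -
    have "{q::c3. norm (f q) < R} = f -` ball 0 R" by (auto simp: dist_norm)
    then show ?thesis using convex_linear_vimage[OF that convex_ball] by simp
  qed
  have "polydisc R1 R2 R3 =
      {q. norm (fst q) < R1} \<inter> {q. norm (fst (snd q)) < R2} \<inter> {q. norm (snd (snd q)) < R3}"
    by (auto simp: polydisc_def)
  moreover have "linear (fst :: c3 \<Rightarrow> complex)" "linear (\<lambda>q::c3. fst (snd q))" "linear (\<lambda>q::c3. snd (snd q))"
    using linear_fst linear_compose[OF linear_snd linear_fst] linear_compose[OF linear_snd linear_snd]
    by (auto simp: o_def)
  ultimately show ?thesis by (metis convex_slab convex_Int)
qed

lemma polydisc_smaller_radii:
  assumes "q \<in> polydisc R1 R2 R3"
  obtains r1 r2 r3 where "0 < r1" "r1 < R1" "0 < r2" "r2 < R2" "0 < r3" "r3 < R3"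
    "q \<in> polydisc r1 r2 r3"
proof
  have "0 \<le> norm (fst q)" "0 \<le> norm (fst (snd q))" "0 \<le> norm (snd (snd q))"
    by simp_all
  then show "0 < (norm (fst q) + R1) / 2" "(norm (fst q) + R1) / 2 < R1"
    "0 < (norm (fst (snd q)) + R2) / 2" "(norm (fst (snd q)) + R2) / 2 < R2"
    "0 < (norm (snd (snd q)) + R3) / 2" "(norm (snd (snd q)) + R3) / 2 < R3"
    "q \<in> polydisc ((norm (fst q) + R1) / 2) ((norm (fst (snd q)) + R2) / 2) ((norm (snd (snd q)) + R3) / 2)"
    using assms by (auto simp: polydisc_def simp del: norm_ge_zero)
qed

lemma nat_mult_power_bounded:
  fixes r R :: real
  assumes "0 < r" "r < R"
  shows "\<exists>C. \<forall>p. of_nat p * r ^ (p - 1) \<le> C * R ^ p"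
proof -
  have "(\<lambda>n. of_nat n * (r / R) ^ n) \<longlonglongrightarrow> 0"
    by (rule powser_times_n_limit_0) (use assms in auto)
  then have "Bseq (\<lambda>n. of_nat n * (r / R) ^ n)" by (rule convergent_imp_Bseq[OF convergentI])
  then obtain K where K: "K > 0" "\<And>n. norm (of_nat n * (r / R) ^ n) \<le> K" by (auto elim: BseqE)
  have "of_nat p * r ^ (p - 1) \<le> (K / r) * R ^ p" for p
  proof (cases p)
    case (Suc n)
    have "of_nat p * (r / R) ^ p \<le> K" using K(2)[of p] assms by auto
    then have "r * (of_nat p * r ^ (p - 1)) \<le> K * R ^ p"
      using assms Suc by (simp add: power_divide divide_le_eq algebra_simps)
    then show ?thesis using assms by (simp add: field_simps)
  qed (use K assms in auto)
  then show ?thesis by blast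
qed

text \<open>Differentiating term by term costs a factor \<open>P \<alpha>\<close>, which is absorbed by shrinking the radius.\<close>
lemma summable_on_dcoeff:
  fixes a :: "idx \<Rightarrow> complex" and W W' :: "idx \<Rightarrow> real"
  assumes summable: "(\<lambda>\<alpha>. norm (a \<alpha>) * R ^ P \<alpha> * W \<alpha>) summable_on UNIV"
    and W: "\<And>\<alpha>. 0 \<le> W' \<alpha>" "\<And>\<alpha>. W' \<alpha> \<le> W \<alpha>" and r: "0 < r" "r < R"
  shows "(\<lambda>\<alpha>. norm (dcoeff a P \<alpha>) * r ^ dexp P \<alpha> * W' \<alpha>) summable_on UNIV"
proof -
  obtain C where C: "\<And>p. of_nat p * r ^ (p - 1) \<le> C * R ^ p"
    using nat_mult_power_bounded[OF r] by blast
  have "0 \<le> C" using C[of 0] by simp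
  show ?thesis
  proof (rule summable_on_comparison_test)
    show "(\<lambda>\<alpha>. C * (norm (a \<alpha>) * R ^ P \<alpha> * W \<alpha>)) summable_on UNIV"
      by (rule summable_on_cmult_right[OF summable])
    fix \<alpha>
    have "norm (a \<alpha>) * (of_nat (P \<alpha>) * r ^ (P \<alpha> - 1)) * W' \<alpha> \<le> norm (a \<alpha>) * (C * R ^ P \<alpha>) * W \<alpha>"
      using W r \<open>0 \<le> C\<close> by (intro mult_mono mult_left_mono C) auto
    then show "norm (dcoeff a P \<alpha>) * r ^ dexp P \<alpha> * W' \<alpha> \<le> C * (norm (a \<alpha>) * R ^ P \<alpha> * W \<alpha>)"
      by (simp add: dcoeff_def dexp_def norm_mult mult_ac)
    show "0 \<le> norm (dcoeff a P \<alpha>) * r ^ dexp P \<alpha> * W' \<alpha>"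
      using W r by simp
  qed
qed

lemma mseries_abs_summable_mono:
  assumes "mseries_abs_summable a P Q S R1 R2 R3"
    "0 \<le> r1" "r1 \<le> R1" "0 \<le> r2" "r2 \<le> R2" "0 \<le> r3" "r3 \<le> R3"
  shows "mseries_abs_summable a P Q S r1 r2 r3"
  unfolding mseries_abs_summable_def
  by (rule summable_on_comparison_test[OF assms(1)[unfolded mseries_abs_summable_def]])
     (use assms in \<open>auto intro!: mult_mono power_mono\<close>)

lemma mseries_abs_summable_partials:
  assumes summable: "mseries_abs_summable a P Q S R1 R2 R3"
    and r: "0 < r1" "r1 < R1" "0 < r2" "r2 < R2" "0 < r3" "r3 < R3"
  shows "mseries_abs_summable (dcoeff a P) (dexp P) Q S r1 r2 r3"
    "mseries_abs_summable (dcoeff a Q) P (dexp Q) S r1 r2 r3"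
    "mseries_abs_summable (dcoeff a S) P Q (dexp S) r1 r2 r3"
proof -
  note A = summable[unfolded mseries_abs_summable_def]
  have "(\<lambda>\<alpha>. norm (dcoeff a P \<alpha>) * r1 ^ dexp P \<alpha> * (r2 ^ Q \<alpha> * r3 ^ S \<alpha>)) summable_on UNIV"
    by (rule summable_on_dcoeff[where R=R1 and W="\<lambda>\<alpha>. R2 ^ Q \<alpha> * R3 ^ S \<alpha>"]) (use A r in \<open>auto simp: mult_ac intro!: mult_mono power_mono\<close>)
  then show "mseries_abs_summable (dcoeff a P) (dexp P) Q S r1 r2 r3"
    by (simp add: mseries_abs_summable_def mult_ac)
  have "(\<lambda>\<alpha>. norm (dcoeff a Q \<alpha>) * r2 ^ dexp Q \<alpha> * (r1 ^ P \<alpha> * r3 ^ S \<alpha>)) summable_on UNIV"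
    by (rule summable_on_dcoeff[where R=R2 and W="\<lambda>\<alpha>. R1 ^ P \<alpha> * R3 ^ S \<alpha>"]) (use A r in \<open>auto simp: mult_ac intro!: mult_mono power_mono\<close>)
  then show "mseries_abs_summable (dcoeff a Q) P (dexp Q) S r1 r2 r3"
    by (simp add: mseries_abs_summable_def mult_ac)
  have "(\<lambda>\<alpha>. norm (dcoeff a S \<alpha>) * r3 ^ dexp S \<alpha> * (r1 ^ P \<alpha> * r2 ^ Q \<alpha>)) summable_on UNIV"
    by (rule summable_on_dcoeff[where R=R3 and W="\<lambda>\<alpha>. R1 ^ P \<alpha> * R2 ^ Q \<alpha>"]) (use A r in \<open>auto simp: mult_ac intro!: mult_mono power_mono\<close>)
  then show "mseries_abs_summable (dcoeff a S) P Q (dexp S) r1 r2 r3"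
    by (simp add: mseries_abs_summable_def mult_ac)
qed

lemma summable_mterm:
  assumes "mseries_abs_summable a P Q S R1 R2 R3"
    "norm (fst q) \<le> R1" "norm (fst (snd q)) \<le> R2" "norm (snd (snd q)) \<le> R3"
  shows "(\<lambda>\<alpha>. mterm a P Q S \<alpha> q) summable_on UNIV"
proof (rule abs_summable_summable)
  show "(\<lambda>\<alpha>. norm (mterm a P Q S \<alpha> q)) summable_on UNIV"
    by (rule summable_on_comparison_test[where f="\<lambda>\<alpha>. norm (a \<alpha>) * R1 ^ P \<alpha> * R2 ^ Q \<alpha> * R3 ^ S \<alpha>"])
       (use assms in \<open>auto simp: mseries_abs_summable_def intro!: norm_mterm_le\<close>)
qed

definition cube :: "nat \<Rightarrow> idx set" where
  "cube n = {..<n} \<times> {..<n} \<times> {..<n}"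

lemma filterlim_cube: "filterlim cube (finite_subsets_at_top UNIV) sequentially"
  unfolding filterlim_finite_subsets_at_top
proof (intro allI impI)
  fix X :: "idx set" assume "finite X \<and> X \<subseteq> UNIV"
  then obtain n where n: "fst ` X \<union> fst ` snd ` X \<union> snd ` snd ` X \<subseteq> {..<n}"
    using finite_nat_bounded[of "fst ` X \<union> fst ` snd ` X \<union> snd ` snd ` X"] by auto
  have "X \<subseteq> cube N" if "n \<le> N" for N
    using n that by (force simp: cube_def)
  then show "\<forall>\<^sub>F N in sequentially. finite (cube N) \<and> X \<subseteq> cube N \<and> cube N \<subseteq> UNIV"
    unfolding eventually_sequentially by (auto simp: cube_def)
qed

lemma has_derivative_c3_coords:
  "((\<lambda>x::c3. fst x) has_derivative (\<lambda>h. fst h)) (at q)"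
  "((\<lambda>x::c3. fst (snd x)) has_derivative (\<lambda>h. fst (snd h))) (at q)"
  "((\<lambda>x::c3. snd (snd x)) has_derivative (\<lambda>h. snd (snd h))) (at q)"
  by (auto intro!: bounded_linear_imp_has_derivative bounded_linear_fst
      bounded_linear_compose[OF bounded_linear_fst bounded_linear_snd]
      bounded_linear_compose[OF bounded_linear_snd bounded_linear_snd])

lemma has_derivative_mterm:
  "(mterm a P Q S \<alpha> has_derivative lin3 (mterm (dcoeff a P) (dexp P) Q S \<alpha> q)
      (mterm (dcoeff a Q) P (dexp Q) S \<alpha> q) (mterm (dcoeff a S) P Q (dexp S) \<alpha> q)) (at q)"
  unfolding mterm_def[abs_def]
  by (rule has_derivative_eq_rhs,
      (rule has_derivative_mult has_derivative_const has_derivative_power has_derivative_c3_coords)+)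
     (auto simp: lin3_def mterm_def dcoeff_def dexp_def fun_eq_iff algebra_simps)

lemma uniform_limit_mseries:
  assumes "mseries_abs_summable a P Q S r1 r2 r3"
  shows "uniform_limit (polydisc r1 r2 r3) (\<lambda>n q. \<Sum>\<alpha>\<in>cube n. mterm a P Q S \<alpha> q) (mseries a P Q S) sequentially"
proof -
  have "uniform_limit (polydisc r1 r2 r3) (\<lambda>X q. \<Sum>\<alpha>\<in>X. mterm a P Q S \<alpha> q)
      (\<lambda>q. \<Sum>\<^sub>\<infinity>\<alpha>\<in>UNIV. mterm a P Q S \<alpha> q) (finite_subsets_at_top UNIV)"
    by (rule Weierstrass_m_test_general[where M="\<lambda>\<alpha>. norm (a \<alpha>) * r1 ^ P \<alpha> * r2 ^ Q \<alpha> * r3 ^ S \<alpha>"])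
       (use assms in \<open>auto simp: mseries_abs_summable_def polydisc_def intro!: norm_mterm_le\<close>)
  from filterlim_compose[OF this filterlim_cube] show ?thesis by (simp add: mseries_def[abs_def])
qed

lemma has_derivative_uniform_limit_lin3:
  assumes K: "open K" "convex K" "q \<in> K"
    and f: "\<And>n x. x \<in> K \<Longrightarrow> (f n has_derivative lin3 (fx n x) (fy n x) (fz n x)) (at x)"
    and lim: "\<And>x. x \<in> K \<Longrightarrow> (\<lambda>n. f n x) \<longlonglongrightarrow> g x"
    and unif: "uniform_limit K fx gx sequentially" "uniform_limit K fy gy sequentially"
      "uniform_limit K fz gz sequentially"
  shows "(g has_derivative lin3 (gx q) (gy q) (gz q)) (at q)"
proof -
  have "\<exists>g'. \<forall>x\<in>K. (\<lambda>n. f n x) \<longlonglongrightarrow> g' x \<and> (g' has_derivative lin3 (gx x) (gy x) (gz x)) (at x within K)"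
  proof (rule has_derivative_sequence[where f'="\<lambda>n x. lin3 (fx n x) (fy n x) (fz n x)"])
    show "convex K" "q \<in> K" "(\<lambda>n. f n q) \<longlonglongrightarrow> g q" using K lim by simp_all
    show "(f n has_derivative lin3 (fx n x) (fy n x) (fz n x)) (at x within K)" if "x \<in> K" for n x
      using f[OF that] by (rule has_derivative_at_withinI)
    show "\<forall>\<^sub>F n in sequentially. \<forall>x\<in>K. \<forall>h. norm (lin3 (fx n x) (fy n x) (fz n x) h - lin3 (gx x) (gy x) (gz x) h)
        \<le> e * norm h" if "e > 0" for e
    proof -
      have "e / 3 > 0" using \<open>e > 0\<close> by simp
      from uniform_limitD[OF unif(1) this] uniform_limitD[OF unif(2) this] uniform_limitD[OF unif(3) this]
      show ?thesis
      proof eventually_elim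
        case (elim n)
        have "norm (lin3 (fx n x) (fy n x) (fz n x) h - lin3 (gx x) (gy x) (gz x) h) \<le> (e/3 + e/3 + e/3) * norm h"
          if "x \<in> K" for x h
          unfolding lin3_diff using elim that
          by (intro order_trans[OF norm_lin3_le] mult_right_mono add_mono) (auto simp: dist_norm less_imp_le)
        then show ?case by simp
      qed
    qed
  qed
  then obtain g' where g': "\<And>x. x \<in> K \<Longrightarrow> (\<lambda>n. f n x) \<longlonglongrightarrow> g' x"
    "(g' has_derivative lin3 (gx q) (gy q) (gz q)) (at q within K)"
    using K(3) by blast
  have "g' x = g x" if "x \<in> K" for x
    using LIMSEQ_unique[OF g'(1) lim] that by blast
  then have "(g has_derivative lin3 (gx q) (gy q) (gz q)) (at q within K)"
    by (rule has_derivative_transform_within_open[OF g'(2) K(1) K(3)])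
  then show ?thesis using at_within_open[OF K(3,1)] by simp
qed

lemma has_derivative_mseries:
  assumes summable: "mseries_abs_summable a P Q S R1 R2 R3" and q: "q \<in> polydisc R1 R2 R3"
  shows "(mseries a P Q S has_derivative
      lin3 (mseries_dx a P Q S q) (mseries_dy a P Q S q) (mseries_dz a P Q S q)) (at q)"
proof -
  obtain r1 r2 r3 where r: "0 < r1" "r1 < R1" "0 < r2" "r2 < R2" "0 < r3" "r3 < R3"
    and "q \<in> polydisc r1 r2 r3"
    using polydisc_smaller_radii[OF q] .
  have "mseries_abs_summable a P Q S r1 r2 r3"
    using mseries_abs_summable_mono[OF summable] r by simp
  note partials = mseries_abs_summable_partials[OF summable r]
  show ?thesis
  proof (rule has_derivative_uniform_limit_lin3[OF open_polydisc convex_polydisc \<open>q \<in> polydisc r1 r2 r3\<close>])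
    show "((\<lambda>x. \<Sum>\<alpha>\<in>cube n. mterm a P Q S \<alpha> x) has_derivative
        lin3 (\<Sum>\<alpha>\<in>cube n. mterm (dcoeff a P) (dexp P) Q S \<alpha> x) (\<Sum>\<alpha>\<in>cube n. mterm (dcoeff a Q) P (dexp Q) S \<alpha> x)
          (\<Sum>\<alpha>\<in>cube n. mterm (dcoeff a S) P Q (dexp S) \<alpha> x)) (at x)" for n x
      by (rule has_derivative_sum_lin3) (rule has_derivative_mterm)
    show "(\<lambda>n. \<Sum>\<alpha>\<in>cube n. mterm a P Q S \<alpha> x) \<longlonglongrightarrow> mseries a P Q S x" if "x \<in> polydisc r1 r2 r3" for x
      using tendsto_uniform_limitI[OF uniform_limit_mseries[OF \<open>mseries_abs_summable a P Q S r1 r2 r3\<close>] that] .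
  qed (intro uniform_limit_mseries partials)+
qed

lemma mseries_has_continuous_partials:
  assumes summable: "mseries_abs_summable a P Q S R1 R2 R3"
  shows "has_continuous_partials_on (polydisc R1 R2 R3) (mseries a P Q S)
      (mseries_dx a P Q S) (mseries_dy a P Q S) (mseries_dz a P Q S)"
proof -
  have "isCont (mseries_dx a P Q S) q \<and> isCont (mseries_dy a P Q S) q \<and> isCont (mseries_dz a P Q S) q"
    if q: "q \<in> polydisc R1 R2 R3" for q
  proof -
    obtain r1 r2 r3 where r: "0 < r1" "r1 < R1" "0 < r2" "r2 < R2" "0 < r3" "r3 < R3"
      and qr: "q \<in> polydisc r1 r2 r3"
      using polydisc_smaller_radii[OF q] .
    note partials = mseries_abs_summable_partials[OF summable r]
    show ?thesis
      using has_derivative_continuous[OF has_derivative_mseries[OF partials(1) qr]]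
        has_derivative_continuous[OF has_derivative_mseries[OF partials(2) qr]]
        has_derivative_continuous[OF has_derivative_mseries[OF partials(3) qr]] by blast
  qed
  then show ?thesis
    unfolding has_continuous_partials_on_def
    by (auto intro!: continuous_at_imp_continuous_on has_derivative_mseries[OF summable])
qed

section \<open>Homogeneous parts in the charts of the blow-up\<close>

definition smul :: "complex \<Rightarrow> c3 \<Rightarrow> c3" where
  "smul s p = (s * fst p, s * fst (snd p), s * snd (snd p))"

lemma monom3_smul: "monom3 \<alpha> (smul s p) = s ^ deg \<alpha> * monom3 \<alpha> p"
  by (cases \<alpha>; cases p) (simp add: monom3_def smul_def deg_def power_mult_distrib power_add)

lemma finite_deg_eq: "finite {\<alpha>. deg \<alpha> = d}"
  by (rule finite_subset[of _ "{..d} \<times> {..d} \<times> {..d}"]) (auto simp: deg_def)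

lemma hpart_smul: "hpart c d (smul s p) = s ^ d * hpart c d p"
  unfolding hpart_def sum_distrib_left by (rule sum.cong) (auto simp: monom3_smul)

definition chart_exp1 :: "nat \<Rightarrow> idx \<Rightarrow> nat" where
  "chart_exp1 j \<alpha> = (if j = 0 then fst (snd \<alpha>) else fst \<alpha>)"

definition chart_exp2 :: "nat \<Rightarrow> idx \<Rightarrow> nat" where
  "chart_exp2 j \<alpha> = (if j = 0 \<or> j = 1 then snd (snd \<alpha>) else fst (snd \<alpha>))"

lemma monom3_dehom: "monom3 \<alpha> (dehom j p) = fst p ^ chart_exp1 j \<alpha> * snd p ^ chart_exp2 j \<alpha>"
  by (cases \<alpha>; cases p) (auto simp: monom3_def dehom_def chart_exp1_def chart_exp2_def)

lemma dehom_aff: "coordc j w \<noteq> 0 \<Longrightarrow> dehom j (aff j w) = smul (1 / coordc j w) w"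
  by (cases "j = 0"; cases "j = 1"; cases w) (auto simp: dehom_def aff_def coordc_def smul_def field_simps)

lemma smul_coordc_dehom_aff: "coordc j w \<noteq> 0 \<Longrightarrow> smul (coordc j w) (dehom j (aff j w)) = w"
  by (cases "j = 0"; cases "j = 1"; cases w) (auto simp: dehom_def aff_def coordc_def smul_def field_simps)

lemma hpart_dehom_aff: "coordc j w \<noteq> 0 \<Longrightarrow> hpart c d (dehom j (aff j w)) = (1 / coordc j w) ^ d * hpart c d w"
  by (simp add: dehom_aff hpart_smul)

lemma hpart_eq_coordc_power: "coordc j w \<noteq> 0 \<Longrightarrow> hpart c d w = coordc j w ^ d * hpart c d (dehom j (aff j w))"
  using hpart_smul[of c d "coordc j w" "dehom j (aff j w)"] by (simp add: smul_coordc_dehom_aff)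

lemma has_derivative_chart_monom:
  "((\<lambda>p. fst p ^ i * snd p ^ l) has_derivative
      lin2 (of_nat i * fst p ^ (i - 1) * snd p ^ l) (of_nat l * fst p ^ i * snd p ^ (l - 1))) (at p)"
proof -
  have "((\<lambda>p::c2. fst p) has_derivative fst) (at p)" "((\<lambda>p::c2. snd p) has_derivative snd) (at p)"
    by (auto intro: bounded_linear_imp_has_derivative bounded_linear_fst bounded_linear_snd)
  then show ?thesis
    by (rule has_derivative_eq_rhs[OF has_derivative_mult[OF has_derivative_power has_derivative_power]])
       (auto simp: lin2_def fun_eq_iff algebra_simps)
qed

lemma holo2_chart_hpart: "holo2 UNIV (\<lambda>p. hpart c d (dehom j p))"
  unfolding holo2_iff
proof (intro conjI ballI open_UNIV)
  fix p :: c2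
  let ?P = "chart_exp1 j" and ?Q = "chart_exp2 j" and ?A = "{\<alpha>. deg \<alpha> = d}"
  define a where "a \<alpha> = of_nat (?P \<alpha>) * fst p ^ (?P \<alpha> - 1) * snd p ^ ?Q \<alpha>" for \<alpha>
  define b where "b \<alpha> = of_nat (?Q \<alpha>) * fst p ^ ?P \<alpha> * snd p ^ (?Q \<alpha> - 1)" for \<alpha>
  have "((\<lambda>p. \<Sum>\<alpha>\<in>?A. c \<alpha> * (fst p ^ ?P \<alpha> * snd p ^ ?Q \<alpha>)) has_derivative
      (\<lambda>h. \<Sum>\<alpha>\<in>?A. c \<alpha> * lin2 (a \<alpha>) (b \<alpha>) h)) (at p)"
    unfolding a_def b_def by (intro has_derivative_sum has_derivative_mult_right has_derivative_chart_monom)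
  moreover have "(\<lambda>h. \<Sum>\<alpha>\<in>?A. c \<alpha> * lin2 (a \<alpha>) (b \<alpha>) h) = lin2 (\<Sum>\<alpha>\<in>?A. c \<alpha> * a \<alpha>) (\<Sum>\<alpha>\<in>?A. c \<alpha> * b \<alpha>)"
    by (simp add: fun_eq_iff lin2_def ring_distribs sum.distrib sum_distrib_left mult_ac)
  ultimately show "\<exists>a b. ((\<lambda>p. hpart c d (dehom j p)) has_derivative lin2 a b) (at p)"
    by (auto simp: hpart_def monom3_dehom)
qed

definition hcoeff :: "(idx \<Rightarrow> complex) \<Rightarrow> nat \<Rightarrow> idx \<Rightarrow> complex" where
  "hcoeff c d \<alpha> = (if deg \<alpha> = d then c \<alpha> else 0)"

lemma mseries_hcoeff:
  "mseries (hcoeff c d) (chart_exp1 j) (chart_exp2 j) (\<lambda>_. 0) q = hpart c d (dehom j (fst q, fst (snd q)))"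
proof -
  have "mseries (hcoeff c d) (chart_exp1 j) (chart_exp2 j) (\<lambda>_. 0) q
      = (\<Sum>\<alpha>\<in>{\<alpha>. deg \<alpha> = d}. mterm (hcoeff c d) (chart_exp1 j) (chart_exp2 j) (\<lambda>_. 0) \<alpha> q)"
    unfolding mseries_def
    by (subst infsum_finite[OF finite_deg_eq, symmetric], rule infsum_cong_neutral)
       (auto simp: mterm_def hcoeff_def)
  also have "\<dots> = hpart c d (dehom j (fst q, fst (snd q)))"
    unfolding hpart_def by (rule sum.cong) (auto simp: mterm_def hcoeff_def monom3_dehom)
  finally show ?thesis .
qed

lemma mseries_abs_summable_hcoeff: "mseries_abs_summable (hcoeff c d) P Q S R1 R2 R3"
  unfolding mseries_abs_summable_def
  by (subst summable_on_cong_neutral[where T="{\<alpha>. deg \<alpha> = d}"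
        and g="\<lambda>\<alpha>. norm (hcoeff c d \<alpha>) * R1 ^ P \<alpha> * R2 ^ Q \<alpha> * R3 ^ S \<alpha>"])
     (auto simp: hcoeff_def finite_deg_eq)

text \<open>\<open>chart_tail c m k j\<close> is the part of \<open>f\<close> of degree \<open>\<ge> m + k\<close>, pulled back to chart \<open>j\<close>
  and divided by \<open>t^(m+k)\<close>.\<close>
definition tail_coeff :: "(idx \<Rightarrow> complex) \<Rightarrow> nat \<Rightarrow> nat \<Rightarrow> idx \<Rightarrow> complex" where
  "tail_coeff c m k \<alpha> = (if m + k \<le> deg \<alpha> then c \<alpha> else 0)"

definition tail_exp :: "nat \<Rightarrow> nat \<Rightarrow> idx \<Rightarrow> nat" where
  "tail_exp m k \<alpha> = deg \<alpha> - (m + k)"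

abbreviation chart_tail :: "(idx \<Rightarrow> complex) \<Rightarrow> nat \<Rightarrow> nat \<Rightarrow> nat \<Rightarrow> c3 \<Rightarrow> complex" where
  "chart_tail c m k j \<equiv> mseries (tail_coeff c m k) (chart_exp1 j) (chart_exp2 j) (tail_exp m k)"

lemma chart_tail_on_E0: "chart_tail c m k j (u, v, 0) = hpart c (m + k) (dehom j (u, v))"
proof -
  have "chart_tail c m k j (u, v, 0) = mseries (hcoeff c (m + k)) (chart_exp1 j) (chart_exp2 j) (\<lambda>_. 0) (u, v, 0)"
    unfolding mseries_def by (rule infsum_cong) (auto simp: mterm_def hcoeff_def tail_coeff_def tail_exp_def)
  then show ?thesis by (simp add: mseries_hcoeff)
qed

lemma chart_tail_aff_nonzero:
  assumes "coordc j w \<noteq> 0" "hpart c (m + k) w \<noteq> 0"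
  shows "chart_tail c m k j (fst (aff j w), snd (aff j w), 0) \<noteq> 0"
  using assms hpart_dehom_aff[of j w c "m + k"] by (simp add: chart_tail_on_E0)

lemma mseries_abs_summable_tail:
  assumes conv: "converges_on_ball c r" and T: "T > 0" and R: "R1 > 0" "R2 > 0"
    and small: "T * (1 + R1 + R2) < r"
  shows "mseries_abs_summable (tail_coeff c m k) (chart_exp1 j) (chart_exp2 j) (tail_exp m k) R1 R2 T"
proof -
  define X where "X = smul (of_real T) (dehom j (of_real R1, of_real R2))"
  have "norm X \<le> norm (fst X) + (norm (fst (snd X)) + norm (snd (snd X)))"
    using norm_Pair_le[of "fst X" "snd X"] norm_Pair_le[of "fst (snd X)" "snd (snd X)"] by simp
  also have "\<dots> \<le> T * (1 + R1 + R2)"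
    using T R by (auto simp: X_def smul_def dehom_def norm_mult algebra_simps)
  finally have "X \<in> ball 0 r" using small by (simp add: dist_norm)
  then have summable: "(\<lambda>\<alpha>. norm (c \<alpha> * monom3 \<alpha> X)) summable_on UNIV"
    using conv by (auto simp: converges_on_ball_def)
  have norm_X: "norm (c \<alpha> * monom3 \<alpha> X) = norm (c \<alpha>) * T ^ deg \<alpha> * R1 ^ chart_exp1 j \<alpha> * R2 ^ chart_exp2 j \<alpha>"
    for \<alpha> using T R by (simp add: X_def monom3_smul monom3_dehom norm_mult norm_power)
  show ?thesis unfolding mseries_abs_summable_def
  proof (rule summable_on_comparison_test)
    show "(\<lambda>\<alpha>. inverse (T ^ (m + k)) * norm (c \<alpha> * monom3 \<alpha> X)) summable_on UNIV"
      by (rule summable_on_cmult_right[OF summable])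
    fix \<alpha>
    show "0 \<le> norm (tail_coeff c m k \<alpha>) * R1 ^ chart_exp1 j \<alpha> * R2 ^ chart_exp2 j \<alpha> * T ^ tail_exp m k \<alpha>"
      using T R by simp
    show "norm (tail_coeff c m k \<alpha>) * R1 ^ chart_exp1 j \<alpha> * R2 ^ chart_exp2 j \<alpha> * T ^ tail_exp m k \<alpha>
        \<le> inverse (T ^ (m + k)) * norm (c \<alpha> * monom3 \<alpha> X)"
    proof (cases "m + k \<le> deg \<alpha>")
      case True
      then have "T ^ tail_exp m k \<alpha> = T ^ deg \<alpha> / T ^ (m + k)" using T by (simp add: tail_exp_def power_diff)
      then show ?thesis using True T by (simp add: tail_coeff_def norm_X field_simps)
    qed (use T R in \<open>simp add: tail_coeff_def norm_X\<close>)
  qed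
qed

lemma strict_eq_hpart_plus_tail:
  assumes low: "\<forall>\<alpha>. deg \<alpha> < m \<longrightarrow> c \<alpha> = 0"
    and gap: "\<forall>\<alpha>. m < deg \<alpha> \<and> deg \<alpha> < m + k \<longrightarrow> c \<alpha> = 0"
    and k: "k \<ge> 1"
    and summable: "mseries_abs_summable (tail_coeff c m k) (chart_exp1 j) (chart_exp2 j) (tail_exp m k) R1 R2 R3"
    and q: "norm (fst q) \<le> R1" "norm (fst (snd q)) \<le> R2" "norm (snd (snd q)) \<le> R3"
  shows "strict c m j q = hpart c m (dehom j (fst q, fst (snd q))) + snd (snd q) ^ k * chart_tail c m k j q"
proof -
  obtain u v t where q_eq: "q = (u, v, t)" by (cases q) auto
  let ?H = "mterm (hcoeff c m) (chart_exp1 j) (chart_exp2 j) (\<lambda>_. 0)"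
  let ?G = "mterm (tail_coeff c m k) (chart_exp1 j) (chart_exp2 j) (tail_exp m k)"
  have split_term: "c \<alpha> * monom3 \<alpha> (dehom j (u, v)) * t ^ (deg \<alpha> - m) = ?H \<alpha> q + t ^ k * ?G \<alpha> q" for \<alpha>
  proof -
    consider "deg \<alpha> < m" | "deg \<alpha> = m" | "m < deg \<alpha> \<and> deg \<alpha> < m + k" | "m + k \<le> deg \<alpha>"
      by linarith
    then show ?thesis
    proof cases
      case 1
      then have "c \<alpha> = 0" using low by blast
      then show ?thesis using 1 by (simp add: mterm_def hcoeff_def tail_coeff_def)
    next
      case 2
      then show ?thesis using k by (simp add: mterm_def hcoeff_def tail_coeff_def q_eq monom3_dehom)
    next
      case 3
      then have "c \<alpha> = 0" using gap by blast
      then show ?thesis using 3 by (simp add: mterm_def hcoeff_def tail_coeff_def)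
    next
      case 4
      then have "t ^ (deg \<alpha> - m) = t ^ k * t ^ (deg \<alpha> - (m + k))"
        by (simp flip: power_add)
      then show ?thesis
        using 4 k by (auto simp: mterm_def hcoeff_def tail_coeff_def q_eq tail_exp_def monom3_dehom)
    qed
  qed
  have sum_H: "(\<lambda>\<alpha>. ?H \<alpha> q) summable_on UNIV"
    by (rule summable_mterm[OF mseries_abs_summable_hcoeff order_refl order_refl order_refl])
  have sum_G: "(\<lambda>\<alpha>. ?G \<alpha> q) summable_on UNIV"
    by (rule summable_mterm[OF summable q])
  have "strict c m j q = (\<Sum>\<^sub>\<infinity>\<alpha>. ?H \<alpha> q + t ^ k * ?G \<alpha> q)"
    by (simp add: strict_def q_eq split_term)
  also have "\<dots> = (\<Sum>\<^sub>\<infinity>\<alpha>. ?H \<alpha> q) + t ^ k * (\<Sum>\<^sub>\<infinity>\<alpha>. ?G \<alpha> q)"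
    by (simp add: infsum_add[OF sum_H summable_on_cmult_right[OF sum_G]] infsum_cmult_right[OF sum_G])
  finally show ?thesis
    using mseries_hcoeff[of c m j q] by (simp add: mseries_def q_eq)
qed

lemma strict_chart_decomposition:
  assumes conv: "converges_on_ball c r"
    and low: "\<forall>\<alpha>. deg \<alpha> < m \<longrightarrow> c \<alpha> = 0"
    and gap: "\<forall>\<alpha>. m < deg \<alpha> \<and> deg \<alpha> < m + k \<longrightarrow> c \<alpha> = 0"
    and k: "k \<ge> 1"
  obtains Om Gx Gy Gz where "open Om" "(u0, v0, 0) \<in> Om"
    "\<And>q. q \<in> Om \<Longrightarrow> strict c m j q = hpart c m (dehom j (fst q, fst (snd q))) + snd (snd q) ^ k * chart_tail c m k j q"
    "has_continuous_partials_on Om (chart_tail c m k j) Gx Gy Gz"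
proof -
  have "r > 0" using conv by (simp add: converges_on_ball_def)
  define R1 where "R1 = norm u0 + 1"
  define R2 where "R2 = norm v0 + 1"
  define T where "T = r / (2 * (1 + R1 + R2))"
  have R: "R1 > 0" "R2 > 0" by (simp_all add: R1_def R2_def add_nonneg_pos)
  then have T: "T > 0" and "T * (1 + R1 + R2) = r / 2"
    using \<open>r > 0\<close> by (simp_all add: T_def field_simps)
  then have "T * (1 + R1 + R2) < r" using \<open>r > 0\<close> by simp
  then have summable: "mseries_abs_summable (tail_coeff c m k) (chart_exp1 j) (chart_exp2 j) (tail_exp m k) R1 R2 T"
    using mseries_abs_summable_tail[OF conv T R] by blast
  show thesis
  proof (rule that[OF open_polydisc _ _ mseries_has_continuous_partials[OF summable]])
    show "(u0, v0, 0) \<in> polydisc R1 R2 T" using T by (simp add: polydisc_def R1_def R2_def)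
    show "strict c m j q = hpart c m (dehom j (fst q, fst (snd q))) + snd (snd q) ^ k * chart_tail c m k j q"
      if "q \<in> polydisc R1 R2 T" for q
      using that by (intro strict_eq_hpart_plus_tail[OF low gap k summable]) (auto simp: polydisc_def)
  qed
qed

section \<open>Singular points of \<open>C\<close> in the charts\<close>

lemma has_derivative_smul: "(smul s has_derivative smul s) (at p)"
  unfolding smul_def[abs_def] by (auto intro!: derivative_eq_intros)

lemma coordc_eq: "coordc j = (if j = 0 then (\<lambda>x. fst x) else if j = 1 then (\<lambda>x. fst (snd x)) else (\<lambda>x. snd (snd x)))"
  by (auto simp: fun_eq_iff coordc_def split: prod.split)

lemma coordc_differentiable: "\<exists>D. (coordc j has_derivative D) (at w)"
  unfolding coordc_eq by (cases "j = 0"; cases "j = 1"; simp; blast intro: has_derivative_c3_coords)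

lemma aff_differentiable:
  assumes "coordc j w \<noteq> 0" shows "\<exists>D. (aff j has_derivative D) (at w)"
proof -
  have aff_eq: "aff j = (if j = 0 then (\<lambda>x. (fst (snd x) / fst x, snd (snd x) / fst x))
     else if j = 1 then (\<lambda>x. (fst x / fst (snd x), snd (snd x) / fst (snd x)))
     else (\<lambda>x. (fst x / snd (snd x), fst (snd x) / snd (snd x))))"
    by (auto simp: fun_eq_iff aff_def split: prod.split)
  consider "j = 0" "fst w \<noteq> 0" | "j = 1" "fst (snd w) \<noteq> 0" | "j \<noteq> 0" "j \<noteq> 1" "snd (snd w) \<noteq> 0"
    using assms by (cases w) (auto simp: coordc_def split: if_splits)
  then show ?thesis
    unfolding aff_eq by cases (simp_all, (rule exI, (rule derivative_intros | assumption)+)+)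
qed

lemma dehom_differentiable: "\<exists>D. (dehom j has_derivative D) (at p)"
proof -
  have "dehom j = (if j = 0 then (\<lambda>p. (1, fst p, snd p)) else if j = 1 then (\<lambda>p. (fst p, 1, snd p))
     else (\<lambda>p. (fst p, snd p, 1)))"
    by (auto simp: fun_eq_iff dehom_def split: prod.split)
  then show ?thesis
    by (cases "j = 0"; cases "j = 1"; simp) (rule exI, (rule derivative_intros)+)+
qed

lemma open_coordc_nonzero: "open {x. coordc j x \<noteq> 0}"
  unfolding coordc_eq by (cases "j = 0"; cases "j = 1") (auto intro!: open_Collect_neq continuous_intros)

text \<open>By homogeneity \<open>f\<^sub>m = s^m \<cdot> f\<^sub>m \<circ> dehom j \<circ> aff j\<close> with \<open>s = coordc j\<close> near \<open>w\<close>; as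
  \<open>f\<^sub>m(w) = 0\<close>, the product rule shows that the gradient of \<open>f\<^sub>m\<close> vanishes at \<open>w\<close> iff that of
  its dehomogenisation vanishes at \<open>aff j w\<close>.\<close>
lemma sing_pt_imp_chart_critical:
  assumes "coordc j w \<noteq> 0" and "(hpart c m has_derivative (\<lambda>_. 0)) (at w)"
  shows "((\<lambda>p. hpart c m (dehom j p)) has_derivative (\<lambda>_. 0)) (at (aff j w))"
proof -
  define s where "s = coordc j w"
  have "s \<noteq> 0" using assms by (simp add: s_def)
  have w_eq: "smul s (dehom j (aff j w)) = w"
    using smul_coordc_dehom_aff[OF assms(1)] by (simp add: s_def)
  have "((\<lambda>y. hpart c m (smul s y)) has_derivative (\<lambda>_. 0)) (at (dehom j (aff j w)))"
    using has_derivative_compose[OF has_derivative_smul, of "hpart c m" "\<lambda>_. 0" s] assms(2) w_eq by simp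
  then have "((\<lambda>y. inverse (s ^ m) * hpart c m (smul s y)) has_derivative (\<lambda>_. 0)) (at (dehom j (aff j w)))"
    using has_derivative_mult_right by fastforce
  moreover have "(\<lambda>y. inverse (s ^ m) * hpart c m (smul s y)) = hpart c m"
    using \<open>s \<noteq> 0\<close> by (simp add: fun_eq_iff hpart_smul)
  ultimately have "(hpart c m has_derivative (\<lambda>_. 0)) (at (dehom j (aff j w)))"
    by simp
  moreover obtain D where "(dehom j has_derivative D) (at (aff j w))"
    using dehom_differentiable by blast
  ultimately show ?thesis
    using has_derivative_compose[of "dehom j" D "aff j w" UNIV "hpart c m" "\<lambda>_. 0"] by simp
qed

lemma chart_critical_imp_sing_pt:
  assumes cw: "coordc j w \<noteq> 0" and "hpart c m w = 0"
    and crit: "((\<lambda>p. hpart c m (dehom j p)) has_derivative (\<lambda>_. 0)) (at (aff j w))"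
  shows "(hpart c m has_derivative (\<lambda>_. 0)) (at w)"
proof -
  obtain D1 where D1: "(coordc j has_derivative D1) (at w)" using coordc_differentiable by blast
  obtain D2 where D2: "(aff j has_derivative D2) (at w)" using aff_differentiable[OF cw] by blast
  have zero: "hpart c m (dehom j (aff j w)) = 0"
    using \<open>hpart c m w = 0\<close> by (simp add: hpart_dehom_aff[OF cw])
  have "((\<lambda>x. coordc j x ^ m * hpart c m (dehom j (aff j x))) has_derivative
      (\<lambda>h. coordc j w ^ m * 0 + (of_nat m * D1 h * coordc j w ^ (m - 1)) * hpart c m (dehom j (aff j w)))) (at w)"
    by (rule has_derivative_mult[OF has_derivative_power[OF D1] has_derivative_compose[OF D2 crit]])
  then have "((\<lambda>x. coordc j x ^ m * hpart c m (dehom j (aff j x))) has_derivative (\<lambda>_. 0)) (at w)"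
    by (simp add: zero)
  then show ?thesis
    by (rule has_derivative_transform_within_open[OF _ open_coordc_nonzero[of j]])
       (use cw hpart_eq_coordc_power in auto)
qed

lemma sing_pt_iff_chart_critical:
  assumes "w \<noteq> 0" "hpart c m w = 0" "coordc j w \<noteq> 0"
  shows "sing_pt c m w \<longleftrightarrow> ((\<lambda>p. hpart c m (dehom j p)) has_derivative (\<lambda>_. 0)) (at (aff j w))"
  unfolding sing_pt_def using assms sing_pt_imp_chart_critical chart_critical_imp_sing_pt by blast

section \<open>Local holomorphic analysis in \<open>\<complex>\<^sup>3\<close>\<close>

definition shear3 :: "complex \<Rightarrow> complex \<Rightarrow> complex \<Rightarrow> c3 \<Rightarrow> c3" where
  "shear3 a b d h = (fst h, fst (snd h), lin3 a b d h)"

lemma bounded_linear_shear3: "bounded_linear (shear3 a b d)"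
  unfolding shear3_def[abs_def]
  by (intro bounded_linear_Pair bounded_linear_fst bounded_linear_lin3
      bounded_linear_compose[OF bounded_linear_fst bounded_linear_snd])

lemma shear3_inverse:
  assumes "d \<noteq> 0"
  shows "shear3 (- (a / d)) (- (b / d)) (1 / d) (shear3 a b d h) = h"
    and "shear3 a b d (shear3 (- (a / d)) (- (b / d)) (1 / d) h) = h"
  using assms by (auto simp: shear3_def lin3_def field_simps)

lemma inv_shear3: "d \<noteq> 0 \<Longrightarrow> inv (shear3 a b d) = shear3 (- (a / d)) (- (b / d)) (1 / d)"
  by (rule inv_equality) (simp_all add: shear3_inverse)

lemma bij_shear3_imp_nonzero: "bij (shear3 a b d) \<Longrightarrow> d \<noteq> 0"
  using bij_is_inj[THEN injD, of "shear3 a b 0" "(0, 0, 1)" "(0, 0, 0)"] by (auto simp: shear3_def lin3_def)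

lemma holo_map3_shear3:
  assumes "open U" and "\<And>q. q \<in> U \<Longrightarrow> \<exists>a b d. (\<Phi> has_derivative shear3 a b d) (at q)"
  shows "holo_map3 U \<Phi>"
proof -
  have "\<exists>a b d. ((\<lambda>q. fst (\<Phi> q)) has_derivative lin3 a b d) (at q) \<and>
      (\<exists>a b d. ((\<lambda>q. fst (snd (\<Phi> q))) has_derivative lin3 a b d) (at q)) \<and>
      (\<exists>a b d. ((\<lambda>q. snd (snd (\<Phi> q))) has_derivative lin3 a b d) (at q))" if q: "q \<in> U" for q
  proof -
    obtain a b d where d: "(\<Phi> has_derivative shear3 a b d) (at q)" using assms(2)[OF q] by blast
    have "((\<lambda>q. fst (\<Phi> q)) has_derivative lin3 1 0 0) (at q)"
      "((\<lambda>q. fst (snd (\<Phi> q))) has_derivative lin3 0 1 0) (at q)"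
      "((\<lambda>q. snd (snd (\<Phi> q))) has_derivative lin3 a b d) (at q)"
      using has_derivative_fst[OF d] has_derivative_fst[OF has_derivative_snd[OF d]]
        has_derivative_snd[OF has_derivative_snd[OF d]]
      by (simp_all add: shear3_def lin3_def[abs_def])
    then show ?thesis by blast
  qed
  then show ?thesis using assms(1) by (simp add: holo_map3_def holo3_iff)
qed

text \<open>The inverse of a shear is a shear, so the local inverse given by the inverse function theorem
  again has \<open>\<complex>\<close>-linear differentials.\<close>
lemma shear_derivative_local_biholo3:
  assumes U0: "open U0" "q0 \<in> U0"
    and d\<Phi>: "\<And>q. q \<in> U0 \<Longrightarrow> (\<Phi> has_derivative shear3 (A q) (B q) (D q)) (at q)"
    and cont: "continuous_on U0 A" "continuous_on U0 B" "continuous_on U0 D"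
    and "D q0 \<noteq> 0"
  obtains U W where "open U" "U \<subseteq> U0" "q0 \<in> U" "biholo3 U W \<Phi>"
proof -
  define f' where "f' q = Blinfun (shear3 (A q) (B q) (D q))" for q
  have f'_apply: "blinfun_apply (f' q) = shear3 (A q) (B q) (D q)" for q
    by (simp add: f'_def bounded_linear_Blinfun_apply bounded_linear_shear3)
  have "continuous_on U0 f'"
  proof (rule continuous_on_blinfun_componentwise)
    show "continuous_on U0 (\<lambda>q. blinfun_apply (f' q) i)" for i
      unfolding f'_apply shear3_def lin3_def by (intro continuous_intros cont)
  qed
  moreover have "Blinfun (shear3 (- (A q0 / D q0)) (- (B q0 / D q0)) (1 / D q0)) o\<^sub>L f' q0 = id_blinfun"
    by (rule blinfun_eqI)
       (simp add: f'_apply bounded_linear_Blinfun_apply bounded_linear_shear3 shear3_inverse \<open>D q0 \<noteq> 0\<close>)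
  ultimately obtain U W \<Psi> g' where U: "open U" "U \<subseteq> U0" "q0 \<in> U" and "open W"
    and hom: "homeomorphism U W \<Phi> \<Psi>"
    and d\<Psi>: "\<And>y. y \<in> W \<Longrightarrow> (\<Psi> has_derivative g' y) (at y)"
    and g': "\<And>y. y \<in> W \<Longrightarrow> g' y = inv (blinfun_apply (f' (\<Psi> y)))"
    and bij: "\<And>y. y \<in> W \<Longrightarrow> bij (blinfun_apply (f' (\<Psi> y)))"
    using inverse_function_theorem[OF U0(1) _ _ U0(2)] d\<Phi> f'_apply by metis
  have "holo_map3 U \<Phi>"
    using U d\<Phi> by (intro holo_map3_shear3) blast+
  moreover have "holo_map3 W \<Psi>"
  proof (rule holo_map3_shear3[OF \<open>open W\<close>])
    fix y assume "y \<in> W"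
    then have "D (\<Psi> y) \<noteq> 0" using bij[of y] by (simp add: f'_apply bij_shear3_imp_nonzero)
    then show "\<exists>a b d. (\<Psi> has_derivative shear3 a b d) (at y)"
      using d\<Psi>[OF \<open>y \<in> W\<close>] g'[OF \<open>y \<in> W\<close>] by (auto simp: f'_apply inv_shear3)
  qed
  moreover have "\<forall>q\<in>U. \<Psi> (\<Phi> q) = q" "\<Phi> ` U = W"
    using hom by (auto simp: homeomorphism_def)
  moreover from this have "bij_betw \<Phi> U W"
    by (metis bij_betw_def inj_on_inverseI)
  ultimately have "biholo3 U W \<Phi>"
    using U \<open>open W\<close> by (auto simp: biholo3_def)
  then show thesis using U that by blast
qed

lemma has_derivative_compose_field:
  assumes "(f has_field_derivative D) (at (g x))" "(g has_derivative g') (at x)"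
  shows "((\<lambda>x. f (g x)) has_derivative (\<lambda>h. D * g' h)) (at x)"
  using has_derivative_compose[OF assms(2) assms(1)[unfolded has_field_derivative_def]] by simp

text \<open>A \<open>k\<close>-th root of \<open>z\<close>, holomorphic wherever \<open>z / g\<^sub>0\<close> avoids the non-positive reals
  (the branch cut of \<open>Ln\<close>).\<close>
definition branch_root :: "complex \<Rightarrow> nat \<Rightarrow> complex \<Rightarrow> complex" where
  "branch_root g0 k z = exp (Ln g0 / of_nat k) * exp (Ln (z / g0) / of_nat k)"

lemma branch_root_nonzero: "branch_root g0 k z \<noteq> 0"
  by (simp add: branch_root_def)

lemma branch_root_power:
  assumes "g0 \<noteq> 0" "z \<noteq> 0" "k \<ge> 1"
  shows "branch_root g0 k z ^ k = z"
proof -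
  have "exp (x / of_nat k) ^ k = exp x" for x :: complex
    using exp_of_nat_mult[of k "x / of_nat k"] assms(3) by simp
  then show ?thesis using assms by (simp add: branch_root_def power_mult_distrib)
qed

lemma has_field_derivative_branch_root:
  assumes "g0 \<noteq> 0" "z / g0 \<notin> \<real>\<^sub>\<le>\<^sub>0" "k \<ge> 1"
  shows "(branch_root g0 k has_field_derivative branch_root g0 k z / (of_nat k * z)) (at z)"
proof -
  have "z \<noteq> 0" using assms(2) by auto
  have "((\<lambda>z. z / g0) has_field_derivative 1 / g0) (at z)"
    using DERIV_cdivide[OF DERIV_ident] .
  from DERIV_cdivide[OF DERIV_chain2[OF has_field_derivative_Ln[OF assms(2)] this], of "of_nat k"]
  have "((\<lambda>z. Ln (z / g0) / of_nat k) has_field_derivative 1 / (of_nat k * z)) (at z)"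
    using assms(1) by (simp add: field_simps)
  from DERIV_cmult[OF DERIV_chain2[OF DERIV_exp this], of "exp (Ln g0 / of_nat k)"]
  show ?thesis
    unfolding branch_root_def[abs_def] by (simp add: field_simps)
qed

text \<open>Near \<open>q\<^sub>0\<close> the quotient \<open>G / G q\<^sub>0\<close> stays in \<open>ball 1 1\<close>, off the branch cut.\<close>
lemma kth_root_has_continuous_partials:
  assumes Om: "open Om" "q0 \<in> Om" and k: "k \<ge> 1"
    and G: "has_continuous_partials_on Om G Gx Gy Gz" and "G q0 \<noteq> 0"
  obtains U0 \<rho> \<rho>x \<rho>y \<rho>z where "open U0" "U0 \<subseteq> Om" "q0 \<in> U0"
    "\<And>q. q \<in> U0 \<Longrightarrow> \<rho> q ^ k = G q" "\<And>q. q \<in> U0 \<Longrightarrow> \<rho> q \<noteq> 0"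
    "has_continuous_partials_on U0 \<rho> \<rho>x \<rho>y \<rho>z"
proof -
  define g0 where "g0 = G q0"
  have "g0 \<noteq> 0" using \<open>G q0 \<noteq> 0\<close> by (simp add: g0_def)
  define U0 where "U0 = (\<lambda>q. G q / g0) -` ball 1 1 \<inter> Om"
  have cont_G: "continuous_on Om G" by (rule has_continuous_partials_on_continuous[OF G])
  have "continuous_on Om (\<lambda>q. G q / g0)"
    using cont_G \<open>g0 \<noteq> 0\<close> by (intro continuous_intros) auto
  then have "open U0"
    unfolding U0_def using continuous_on_open_vimage[OF Om(1)] open_ball by blast
  have "q0 \<in> U0" using Om \<open>g0 \<noteq> 0\<close> by (simp add: U0_def g0_def)
  have off_cut: "G q / g0 \<notin> \<real>\<^sub>\<le>\<^sub>0" if "q \<in> U0" for q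
  proof -
    have "norm (1 - G q / g0) < 1" using that by (simp add: U0_def dist_norm)
    then have "Re (G q / g0) > 0" using abs_Re_le_cmod[of "1 - G q / g0"] by simp
    then show ?thesis by (auto simp: complex_nonpos_Reals_iff)
  qed
  then have G_nz: "G q \<noteq> 0" if "q \<in> U0" for q using that by fastforce
  define \<rho> where "\<rho> q = branch_root g0 k (G q)" for q
  define \<rho>' where "\<rho>' F q = \<rho> q * F q / (of_nat k * G q)" for F q
  have "(\<rho> has_derivative lin3 (\<rho>' Gx q) (\<rho>' Gy q) (\<rho>' Gz q)) (at q)" if "q \<in> U0" for q
  proof -
    have "(G has_derivative lin3 (Gx q) (Gy q) (Gz q)) (at q)"
      using G that by (auto simp: has_continuous_partials_on_def U0_def)
    from has_derivative_compose_field[OF has_field_derivative_branch_root[OF \<open>g0 \<noteq> 0\<close> off_cut[OF that] k] this]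
    show ?thesis
      unfolding \<rho>_def[abs_def] by (simp add: \<rho>'_def \<rho>_def lin3_def[abs_def] algebra_simps)
  qed
  moreover from this have "continuous_on U0 \<rho>"
    by (intro continuous_at_imp_continuous_on ballI has_derivative_continuous) blast
  moreover have "continuous_on U0 (\<rho>' F)" if "continuous_on Om F" for F
    unfolding \<rho>'_def[abs_def] using G_nz k
    by (intro continuous_intros calculation(2) continuous_on_subset[OF that]
        continuous_on_subset[OF cont_G]) (auto simp: U0_def)
  ultimately have "has_continuous_partials_on U0 \<rho> (\<rho>' Gx) (\<rho>' Gy) (\<rho>' Gz)"
    using G by (simp add: has_continuous_partials_on_def)
  moreover have "U0 \<subseteq> Om" by (auto simp: U0_def)
  moreover have "\<rho> q ^ k = G q" if "q \<in> U0" for q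
    using \<open>g0 \<noteq> 0\<close> G_nz[OF that] k by (simp add: \<rho>_def branch_root_power)
  moreover have "\<rho> q \<noteq> 0" for q by (simp add: \<rho>_def branch_root_nonzero)
  ultimately show thesis using that \<open>open U0\<close> \<open>q0 \<in> U0\<close> by blast
qed

lemma has_derivative_shift2:
  fixes f :: "c2 \<Rightarrow> complex"
  assumes "(f has_derivative f') (at (fst p + a, snd p + b))"
  shows "((\<lambda>p. f (fst p + a, snd p + b)) has_derivative f') (at p)"
proof -
  have "((\<lambda>p::c2. (fst p + a, snd p + b)) has_derivative (\<lambda>h. (fst h + 0, snd h + 0))) (at p)"
    by (intro has_derivative_Pair has_derivative_add has_derivative_fst has_derivative_snd
        has_derivative_ident has_derivative_const)
  from has_derivative_compose[OF this assms] show ?thesis by simp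
qed

lemma holo2_shift: "holo2 UNIV f \<Longrightarrow> holo2 UNIV (\<lambda>p. f (fst p + a, snd p + b))"
  unfolding holo2_iff by (blast intro: has_derivative_shift2)

lemma holo3_const: "open U \<Longrightarrow> holo3 U (\<lambda>_. c)"
  unfolding holo3_iff lin3_def[abs_def] by (auto intro!: exI[of _ 0])

lemma holo2_const: "open U \<Longrightarrow> holo2 U (\<lambda>_. c)"
  unfolding holo2_iff lin2_def[abs_def] by (auto intro!: exI[of _ 0])

lemma open_slice_E0:
  fixes U :: "c3 set"
  assumes "open U"
  shows "open {(u, v). (u, v, 0) \<in> U}"
proof -
  have "open ((\<lambda>p::c2. (fst p, snd p, 0::complex)) -` U)"
    by (rule continuous_open_vimage[OF \<open>open U\<close>]) (intro continuous_intros)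
  moreover have "(\<lambda>p::c2. (fst p, snd p, 0::complex)) -` U = {(u, v). (u, v, 0) \<in> U}" by auto
  ultimately show ?thesis by simp
qed

section \<open>Hypersurfaces \<open>h\<^sub>0(u, v) + t^k G = 0\<close> along \<open>t = 0\<close>\<close>

lemma has_derivative_on_E0:
  fixes F G :: "c3 \<Rightarrow> complex" and h0 :: "c2 \<Rightarrow> complex"
  assumes Om: "open Om" "(u0, v0, 0) \<in> Om" and k: "k \<ge> 1"
    and F: "\<And>q. q \<in> Om \<Longrightarrow> F q = h0 (fst q, fst (snd q)) + snd (snd q) ^ k * G q"
    and h0: "(h0 has_derivative lin2 a b) (at (u0, v0))"
    and G: "(G has_derivative G') (at (u0, v0, 0))"
  shows "(F has_derivative lin3 a b (of_nat k * 0 ^ (k - 1) * G (u0, v0, 0))) (at (u0, v0, 0))"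
proof -
  have proj: "((\<lambda>q::c3. (fst q, fst (snd q))) has_derivative (\<lambda>h. (fst h, fst (snd h)))) (at (u0, v0, 0))"
    using has_derivative_c3_coords by (intro has_derivative_Pair)
  have "((\<lambda>q::c3. h0 (fst q, fst (snd q))) has_derivative (\<lambda>h. lin2 a b (fst h, fst (snd h)))) (at (u0, v0, 0))"
    using has_derivative_compose[OF proj, of h0 "lin2 a b"] h0 by simp
  moreover have "((\<lambda>q. snd (snd q) ^ k * G q) has_derivative
      (\<lambda>h. 0 ^ k * G' h + of_nat k * snd (snd h) * 0 ^ (k - 1) * G (u0, v0, 0))) (at (u0, v0, 0))"
    using has_derivative_mult[OF has_derivative_power[OF has_derivative_c3_coords(3)] G] by simp
  ultimately have "((\<lambda>q. h0 (fst q, fst (snd q)) + snd (snd q) ^ k * G q) has_derivative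
      lin3 a b (of_nat k * 0 ^ (k - 1) * G (u0, v0, 0))) (at (u0, v0, 0))"
    by (rule has_derivative_eq_rhs[OF has_derivative_add]) (use k in \<open>auto simp: fun_eq_iff lin2_def lin3_def\<close>)
  then show ?thesis
    by (rule has_derivative_transform_within_open[OF _ Om]) (simp add: F)
qed

lemma transversal_E0_iff_not_critical:
  fixes F G :: "c3 \<Rightarrow> complex" and h0 :: "c2 \<Rightarrow> complex"
  assumes Om: "open Om" "(u0, v0, 0) \<in> Om" and k: "k \<ge> 1"
    and F: "\<And>q. q \<in> Om \<Longrightarrow> F q = h0 (fst q, fst (snd q)) + snd (snd q) ^ k * G q"
    and h0: "(h0 has_derivative lin2 a b) (at (u0, v0))"
    and G: "(G has_derivative G') (at (u0, v0, 0))"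
  shows "transversal_E0 F (u0, v0, 0) \<longleftrightarrow> h0 (u0, v0) = 0 \<and> \<not> (h0 has_derivative (\<lambda>_. 0)) (at (u0, v0))"
proof -
  note dF = has_derivative_on_E0[OF Om k F h0 G]
  have transversal_iff: "(\<exists>a' b' d'. (F has_derivative lin3 a' b' d') (at (u0, v0, 0)) \<and> (a' \<noteq> 0 \<or> b' \<noteq> 0))
      \<longleftrightarrow> a \<noteq> 0 \<or> b \<noteq> 0"
  proof
    assume "\<exists>a' b' d'. (F has_derivative lin3 a' b' d') (at (u0, v0, 0)) \<and> (a' \<noteq> 0 \<or> b' \<noteq> 0)"
    then obtain a' b' d' where d': "(F has_derivative lin3 a' b' d') (at (u0, v0, 0))" and "a' \<noteq> 0 \<or> b' \<noteq> 0"
      by blast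
    moreover have "lin3 a b (of_nat k * 0 ^ (k - 1) * G (u0, v0, 0)) = lin3 a' b' d'"
      by (rule has_derivative_unique[OF dF d'])
    ultimately show "a \<noteq> 0 \<or> b \<noteq> 0" by simp
  next
    assume "a \<noteq> 0 \<or> b \<noteq> 0"
    with dF show "\<exists>a' b' d'. (F has_derivative lin3 a' b' d') (at (u0, v0, 0)) \<and> (a' \<noteq> 0 \<or> b' \<noteq> 0)"
      by blast
  qed
  have critical_iff: "(h0 has_derivative (\<lambda>_. 0)) (at (u0, v0)) \<longleftrightarrow> a = 0 \<and> b = 0"
  proof
    assume "(h0 has_derivative (\<lambda>_. 0)) (at (u0, v0))"
    from has_derivative_unique[OF h0 this] show "a = 0 \<and> b = 0" by (simp add: lin2_eq_zero_iff)
  qed (use h0 in \<open>simp add: lin2_def[abs_def]\<close>)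
  have "F (u0, v0, 0) = h0 (u0, v0)" using F[OF Om(2)] k by simp
  then show ?thesis
    unfolding transversal_E0_iff transversal_iff critical_iff by simp
qed

lemma has_derivative_straightening:
  assumes "has_continuous_partials_on U0 \<rho> \<rho>x \<rho>y \<rho>z" "q \<in> U0"
  shows "((\<lambda>q. (fst q - u0, fst (snd q) - v0, snd (snd q) * \<rho> q)) has_derivative
      shear3 (snd (snd q) * \<rho>x q) (snd (snd q) * \<rho>y q) (\<rho> q + snd (snd q) * \<rho>z q)) (at q)"
proof -
  have "(\<rho> has_derivative lin3 (\<rho>x q) (\<rho>y q) (\<rho>z q)) (at q)"
    using assms by (simp add: has_continuous_partials_on_def)
  from has_derivative_Pair[OF has_derivative_diff[OF has_derivative_c3_coords(1) has_derivative_const]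
      has_derivative_Pair[OF has_derivative_diff[OF has_derivative_c3_coords(2) has_derivative_const]
        has_derivative_mult[OF has_derivative_c3_coords(3) this]]]
  show ?thesis
    by (rule has_derivative_eq_rhs) (simp add: fun_eq_iff shear3_def lin3_def algebra_simps)
qed

lemma normal_form_on_E0:
  fixes F G :: "c3 \<Rightarrow> complex" and h0 :: "c2 \<Rightarrow> complex"
  assumes Om: "open Om" "(u0, v0, 0) \<in> Om" and k: "k \<ge> 1"
    and F: "\<And>q. q \<in> Om \<Longrightarrow> F q = h0 (fst q, fst (snd q)) + snd (snd q) ^ k * G q"
    and G: "has_continuous_partials_on Om G Gx Gy Gz" "G (u0, v0, 0) \<noteq> 0"
    and h0: "holo2 UNIV h0" "h0 (u0, v0) = 0" "(h0 has_derivative (\<lambda>_. 0)) (at (u0, v0))"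
  shows "\<exists>U W \<Phi> e h D e2.
      (u0, v0, 0) \<in> U \<and> biholo3 U W \<Phi> \<and> \<Phi> (u0, v0, 0) = (0, 0, 0) \<and>
      (\<forall>q \<in> U. snd (snd (\<Phi> q)) = 0 \<longleftrightarrow> snd (snd q) = 0) \<and>
      holo3 U e \<and> (\<forall>q \<in> U. e q \<noteq> 0) \<and>
      holo2 D h \<and> (\<forall>p \<in> W. (fst p, fst (snd p)) \<in> D) \<and>
      (\<forall>q \<in> U. F q = e q * ((snd (snd (\<Phi> q))) ^ k + h (fst (\<Phi> q), fst (snd (\<Phi> q))))) \<and>
      holo2 {(u, v). (u, v, 0) \<in> U} e2 \<and>
      (\<forall>u v. (u, v, 0) \<in> U \<longrightarrow> e2 (u, v) \<noteq> 0 \<and>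
          h0 (u, v) = e2 (u, v) * h (fst (\<Phi> (u, v, 0)), fst (snd (\<Phi> (u, v, 0))))) \<and>
      h (0, 0) = 0 \<and> (h has_derivative (\<lambda>_. 0)) (at (0, 0))"
proof -
  obtain U0 \<rho> \<rho>x \<rho>y \<rho>z where U0: "open U0" "U0 \<subseteq> Om" "(u0, v0, 0) \<in> U0"
    and \<rho>: "\<And>q. q \<in> U0 \<Longrightarrow> \<rho> q ^ k = G q" "\<And>q. q \<in> U0 \<Longrightarrow> \<rho> q \<noteq> 0"
    and \<rho>_partials: "has_continuous_partials_on U0 \<rho> \<rho>x \<rho>y \<rho>z"
    using kth_root_has_continuous_partials[OF Om k G] by blast
  define \<Phi> where "\<Phi> q = (fst q - u0, fst (snd q) - v0, snd (snd q) * \<rho> q)" for q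
  obtain U W where U: "open U" "U \<subseteq> U0" "(u0, v0, 0) \<in> U" and "biholo3 U W \<Phi>"
  proof (rule shear_derivative_local_biholo3[OF U0(1,3)])
    show "(\<Phi> has_derivative shear3 (snd (snd q) * \<rho>x q) (snd (snd q) * \<rho>y q) (\<rho> q + snd (snd q) * \<rho>z q)) (at q)"
      if "q \<in> U0" for q
      unfolding \<Phi>_def[abs_def] using \<rho>_partials that by (rule has_derivative_straightening)
    show "continuous_on U0 (\<lambda>q. snd (snd q) * \<rho>x q)" "continuous_on U0 (\<lambda>q. snd (snd q) * \<rho>y q)"
      "continuous_on U0 (\<lambda>q. \<rho> q + snd (snd q) * \<rho>z q)"
      using \<rho>_partials has_continuous_partials_on_continuous[OF \<rho>_partials]
      by (auto simp: has_continuous_partials_on_def intro!: continuous_intros)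
    show "\<rho> (u0, v0, 0) + snd (snd (u0, v0, 0::complex)) * \<rho>z (u0, v0, 0) \<noteq> 0"
      using \<rho>(2)[OF U0(3)] by simp
  qed (use that in blast)
  define h where "h p = h0 (fst p + u0, snd p + v0)" for p
  have "F q = (snd (snd (\<Phi> q))) ^ k + h (fst (\<Phi> q), fst (snd (\<Phi> q)))" if "q \<in> U" for q
  proof -
    have "q \<in> U0" "q \<in> Om" using that U U0 by auto
    then show ?thesis by (simp add: F \<rho>(1) \<Phi>_def h_def power_mult_distrib add.commute)
  qed
  moreover have "holo2 UNIV h"
    unfolding h_def[abs_def] using holo2_shift[OF h0(1)] .
  moreover have "(h has_derivative (\<lambda>_. 0)) (at (0, 0))"
    unfolding h_def[abs_def] using h0(3) by (intro has_derivative_shift2) simp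
  moreover have "\<forall>q \<in> U. snd (snd (\<Phi> q)) = 0 \<longleftrightarrow> snd (snd q) = 0"
    using U \<rho>(2) by (auto simp: \<Phi>_def)
  ultimately show ?thesis
    using U \<open>biholo3 U W \<Phi>\<close> h0(2)
    by (intro exI[of _ U] exI[of _ W] exI[of _ \<Phi>] exI[of _ "\<lambda>_. 1"] exI[of _ h] exI[of _ UNIV] exI[of _ "\<lambda>_. 1"])
       (simp add: \<Phi>_def h_def holo3_const holo2_const open_slice_E0)
qed

theorem lemma5p1:
  fixes c :: "nat \<times> nat \<times> nat \<Rightarrow> complex" and m k :: nat and r :: real
    and w :: c3 and j :: nat
  assumes conv: "converges_on_ball c r"
    and low: "\<forall>\<alpha>. deg \<alpha> < m \<longrightarrow> c \<alpha> = 0"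
    and gap: "\<forall>\<alpha>. m < deg \<alpha> \<and> deg \<alpha> < m + k \<longrightarrow> c \<alpha> = 0"
    and fm_nz: "hpart c m \<noteq> (\<lambda>_. 0)"
    and k: "k \<ge> 1"
    and sing_hyp: "\<forall>p. sing_pt c m p \<longrightarrow> hpart c (m + k) p \<noteq> 0"
    and w_nz: "w \<noteq> 0" and P_on_C: "hpart c m w = 0"
    and j: "j < 3" and chart: "coordc j w \<noteq> 0"
  shows "(transversal_E0 (strict c m j) (fst (aff j w), snd (aff j w), 0)
            \<longleftrightarrow> \<not> sing_pt c m w)
       \<and> (sing_pt c m w \<longrightarrow>
            (\<exists>U W \<Phi> e h D e2.
               (fst (aff j w), snd (aff j w), 0) \<in> U \<and> biholo3 U W \<Phi> \<and>
               \<Phi> (fst (aff j w), snd (aff j w), 0) = (0, 0, 0) \<and>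
               (\<forall>q \<in> U. snd (snd (\<Phi> q)) = 0 \<longleftrightarrow> snd (snd q) = 0) \<and>
               holo3 U e \<and> (\<forall>q \<in> U. e q \<noteq> 0) \<and>
               holo2 D h \<and> (\<forall>p \<in> W. (fst p, fst (snd p)) \<in> D) \<and>
               (\<forall>q \<in> U. strict c m j q =
                   e q * ((snd (snd (\<Phi> q))) ^ k + h (fst (\<Phi> q), fst (snd (\<Phi> q))))) \<and>
               holo2 {(u, v). (u, v, 0) \<in> U} e2 \<and>
               (\<forall>u v. (u, v, 0) \<in> U \<longrightarrow> e2 (u, v) \<noteq> 0 \<and>
                   hpart c m (dehom j (u, v)) =
                     e2 (u, v) * h (fst (\<Phi> (u, v, 0)), fst (snd (\<Phi> (u, v, 0))))) \<and>
               h (0, 0) = 0 \<and> (h has_derivative (\<lambda>_. 0)) (at (0, 0))))"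
proof -
  define u0 where "u0 = fst (aff j w)"
  define v0 where "v0 = snd (aff j w)"
  define h0 where "h0 = (\<lambda>p. hpart c m (dehom j p))"
  obtain Om Gx Gy Gz where Om: "open Om" "(u0, v0, 0) \<in> Om"
    and split: "\<And>q. q \<in> Om \<Longrightarrow> strict c m j q = h0 (fst q, fst (snd q)) + snd (snd q) ^ k * chart_tail c m k j q"
    and G: "has_continuous_partials_on Om (chart_tail c m k j) Gx Gy Gz"
    using strict_chart_decomposition[OF conv low gap k] unfolding h0_def by blast
  then have dG: "(chart_tail c m k j has_derivative lin3 (Gx (u0, v0, 0)) (Gy (u0, v0, 0)) (Gz (u0, v0, 0)))
      (at (u0, v0, 0))" by (simp add: has_continuous_partials_on_def)
  have "holo2 UNIV h0" unfolding h0_def by (rule holo2_chart_hpart)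
  then obtain a b where dh0: "(h0 has_derivative lin2 a b) (at (u0, v0))"
    unfolding holo2_iff by blast
  have h0_zero: "h0 (u0, v0) = 0"
    using P_on_C chart hpart_dehom_aff[of j w c m] by (simp add: h0_def u0_def v0_def)
  have sing_iff: "sing_pt c m w \<longleftrightarrow> (h0 has_derivative (\<lambda>_. 0)) (at (u0, v0))"
    using sing_pt_iff_chart_critical[OF w_nz P_on_C chart] by (simp add: h0_def u0_def v0_def)
  have "chart_tail c m k j (u0, v0, 0) \<noteq> 0" if "sing_pt c m w"
    unfolding u0_def v0_def using that sing_hyp chart by (intro chart_tail_aff_nonzero) blast+
  then show ?thesis
    using transversal_E0_iff_not_critical[OF Om k split dh0 dG]
      normal_form_on_E0[OF Om k split G _ \<open>holo2 UNIV h0\<close> h0_zero] h0_zero sing_iff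
    unfolding u0_def v0_def h0_def by auto
qed

end
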